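(* Let $n\ge2$ and $\lambda=(\lambda_1\ge\dots\ge\lambda_n)$ be a partition. Then \[ \bigl[\pi^{(\beta)}_{c_{n-1}}x^\lambda\bigr]_\lambda\in\operatorname{Ker}\pi^{(\beta)}_{c_1\cdots c_{n-2}}, \] where $\pi^{(\beta)}_{c_{n-1}}x^\lambda=\pi_{n-1}^{(\beta)}\cdots\pi_2^{(\beta)}\pi_1^{(\beta)}(x_1^{\lambda_1}\cdots x_n^{\lambda_n})$ and $\pi^{(\beta)}_{c_1\cdots c_{n-2}}$ is the operator associated with the longest element $c_1c_2\cdots c_{n-2}$ of the subgroup $\langle s_1,\dots,s_{n-2}\rangle\subset S_n$ (the identity operator if $n=2$).
   Context: Demazure--Lascoux operators on $\mathbb{Z}[\beta][x_1,\dots,x_n]$: $\pi_i^{(\beta)}(f)=\partial_i(x_if+\beta x_ix_{i+1}f)$, where $\partial_i f=(f-s_if)/(x_i-x_{i+1})$ and $s_if$ swaps $x_i,x_{i+1}$. They satisfy the braid relations, so for a permutation $v$ with reduced word $s_{j_1}\cdots s_{j_m}$ the composition $\pi^{(\beta)}_{j_1}\circ\dots\circ\pi^{(\beta)}_{j_m}$ does not depend on the reduced word; for the longest element of $\langle s_1,\dots,s_{n-2}\rangle$ (an involution) it also equals the composition taken in the reverse order, and this is $\pi^{(\beta)}_{c_1\cdots c_{n-2}}$. Here $c_k=s_k s_{k-1}\cdots s_1$. A monomial $\beta^mx_1^{\mu_1}\cdots x_n^{\mu_n}$ is $\lambda$-alternating if $\lambda_1\ge\mu_1\ge\lambda_2\ge\mu_2\ge\dots\ge\lambda_{n-1}\ge\mu_{n-1}\ge\lambda_n$,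 and $\lambda$-nonalternating otherwise. For a polynomial $p$, $[p]_\lambda$ denotes the sum of all $\lambda$-nonalternating terms of $p$ (with their coefficients). *)

theory Defs
  imports Main "HOL-Library.Poly_Mapping"
begin

text \<open>Polynomials in Z[beta][x_1,x_2,...]: finitely supported maps from monomials
(exponent vectors nat =>0 nat) to int.  Variable 0 is beta, variable i >= 1 is x_i.\<close>

type_synonym bpoly = "(nat \<Rightarrow>\<^sub>0 nat) \<Rightarrow>\<^sub>0 int"

definition var :: "nat \<Rightarrow> bpoly" where
  "var k = Poly_Mapping.single (Poly_Mapping.single k 1) 1"

abbreviation beta :: bpoly where "beta \<equiv> var 0"

definition swap_mon :: "nat \<Rightarrow> (nat \<Rightarrow>\<^sub>0 nat) \<Rightarrow> (nat \<Rightarrow>\<^sub>0 nat)" where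
  "swap_mon i m = Abs_poly_mapping (\<lambda>k. Poly_Mapping.lookup m ((id(i := Suc i, Suc i := i)) k))"

definition swap_var :: "nat \<Rightarrow> bpoly \<Rightarrow> bpoly" where
  "swap_var i f = Abs_poly_mapping (\<lambda>m. Poly_Mapping.lookup f (swap_mon i m))"

definition ddiff :: "nat \<Rightarrow> bpoly \<Rightarrow> bpoly" where
  "ddiff i f = (THE q. q * (var i - var (Suc i)) = f - swap_var i f)"

definition dl_pi :: "nat \<Rightarrow> bpoly \<Rightarrow> bpoly" where
  "dl_pi i f = ddiff i (var i * f + beta * var i * var (Suc i) * f)"

definition dl_word :: "nat list \<Rightarrow> bpoly \<Rightarrow> bpoly" where
  "dl_word ws f = foldr dl_pi ws f"

text \<open>Reduced word of c_1 c_2 ... c_(n-2), with c_k = s_k s_(k-1) ... s_1.\<close>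
definition w0_word :: "nat \<Rightarrow> nat list" where
  "w0_word n = concat (map (\<lambda>k. rev [1..<Suc k]) [1..<n - 1])"

definition c_word :: "nat \<Rightarrow> nat list" where
  "c_word k = rev [1..<Suc k]"

definition xmon :: "nat \<Rightarrow> (nat \<Rightarrow> nat) \<Rightarrow> bpoly" where
  "xmon n lam = (\<Prod>k = 1..n. var k ^ lam k)"

definition alternating :: "nat \<Rightarrow> (nat \<Rightarrow> nat) \<Rightarrow> (nat \<Rightarrow>\<^sub>0 nat) \<Rightarrow> bool" where
  "alternating n lam m \<longleftrightarrow> (\<forall>j \<in> {1..<n}. lam (Suc j) \<le> Poly_Mapping.lookup m j \<and> Poly_Mapping.lookup m j \<le> lam j)"

definition nonalt_part :: "nat \<Rightarrow> (nat \<Rightarrow> nat) \<Rightarrow> bpoly \<Rightarrow> bpoly" where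
  "nonalt_part n lam p = Abs_poly_mapping (\<lambda>m. if alternating n lam m then 0 else Poly_Mapping.lookup p m)"

end

theory Submission
  imports Defs
begin

(* Let G = pi_{n-1} ... pi_1 x^lambda and split the nonalternating part [G]_lambda according to the
   largest position j < n at which the interlacing lambda_{j+1} <= mu_j <= lambda_j fails.
   Selecting terms by a condition on the exponent of x_j commutes with pi_k for k > j, so the piece
   for j arises from the terms of pi_j ... pi_1 x^lambda violating the interlacing at j by applying
   pi_{n-1} ... pi_{j+1} and then a selection that commutes with pi_{j-1}.  For j = 1 there are no
   such terms.  For j = i + 1 >= 2 they are annihilated by pi_i: monomial by monomial they form
   x_{i+1} (1 + beta x_i) h with h symmetric in x_i, x_{i+1}, and multiplying by the weight
   x_i (1 + beta x_{i+1}) of pi_i gives a symmetric polynomial.  Finally, by the braid relations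
   every pi_i with i <= n - 2 is a rightmost factor of pi_{c_1 ... c_{n-2}}, which therefore kills
   every piece. *)

section \<open>Swapping adjacent variables\<close>

lemma frag_induct [case_names zero one diff]:
  assumes "P 0" and "\<And>x. P (frag_of x)" and "\<And>a b. P a \<Longrightarrow> P b \<Longrightarrow> P (a - b)"
  shows "P c"
  by (rule frag_induction[of c UNIV]) (use assms in auto)

definition swap_index :: "nat \<Rightarrow> nat \<Rightarrow> nat" where
  "swap_index i = id(i := Suc i, Suc i := i)"

lemma swap_index_simps [simp]:
  "swap_index i i = Suc i" "swap_index i (Suc i) = i"
  "k \<noteq> i \<Longrightarrow> k \<noteq> Suc i \<Longrightarrow> swap_index i k = k"
  by (auto simp: swap_index_def)

lemma swap_index_swap_index [simp]: "swap_index i (swap_index i k) = k"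
  by (simp add: swap_index_def)

lemma lookup_swap_mon: "Poly_Mapping.lookup (swap_mon i m) k = Poly_Mapping.lookup m (swap_index i k)"
proof -
  have "inj (swap_index i)"
    by (metis injI swap_index_swap_index)
  then have "finite {k. Poly_Mapping.lookup m (swap_index i k) \<noteq> 0}"
    using finite_vimageI[OF finite_keys[of m]] by (simp add: vimage_def in_keys_iff)
  then show ?thesis
    by (simp add: swap_mon_def swap_index_def lookup_Abs_poly_mapping)
qed

lemma swap_mon_swap_mon [simp]: "swap_mon i (swap_mon i m) = m"
  by (rule poly_mapping_eqI) (simp add: lookup_swap_mon)

lemma swap_mon_add: "swap_mon i (a + b) = swap_mon i a + swap_mon i b"
  by (rule poly_mapping_eqI) (simp add: lookup_swap_mon lookup_add)

lemma swap_mon_single: "swap_mon i (Poly_Mapping.single k p) = Poly_Mapping.single (swap_index i k) p"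
  by (rule poly_mapping_eqI) (metis lookup_single_eq lookup_single_not_eq lookup_swap_mon swap_index_swap_index)

lemma swap_mon_eq_self:
  "Poly_Mapping.lookup m i = 0 \<Longrightarrow> Poly_Mapping.lookup m (Suc i) = 0 \<Longrightarrow> swap_mon i m = m"
  by (rule poly_mapping_eqI) (simp add: lookup_swap_mon swap_index_def)

lemma lookup_swap_var: "Poly_Mapping.lookup (swap_var i f) m = Poly_Mapping.lookup f (swap_mon i m)"
proof -
  have "inj (swap_mon i)"
    by (metis injI swap_mon_swap_mon)
  then have "finite {m. Poly_Mapping.lookup f (swap_mon i m) \<noteq> 0}"
    using finite_vimageI[OF finite_keys[of f]] by (simp add: vimage_def in_keys_iff)
  then show ?thesis
    by (simp add: swap_var_def lookup_Abs_poly_mapping)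
qed

lemma swap_var_single: "swap_var i (Poly_Mapping.single m c) = Poly_Mapping.single (swap_mon i m) c"
  by (rule poly_mapping_eqI) (metis lookup_single_eq lookup_single_not_eq lookup_swap_var swap_mon_swap_mon)

lemma swap_var_swap_var [simp]: "swap_var i (swap_var i f) = f"
  by (rule poly_mapping_eqI) (simp add: lookup_swap_var)

lemma swap_var_add [simp]: "swap_var i (f + g) = swap_var i f + swap_var i g"
  by (rule poly_mapping_eqI) (simp add: lookup_swap_var lookup_add)

lemma swap_var_diff [simp]: "swap_var i (f - g) = swap_var i f - swap_var i g"
  by (rule poly_mapping_eqI) (simp add: lookup_swap_var lookup_minus)

lemma swap_var_zero [simp]: "swap_var i 0 = 0"
  by (rule poly_mapping_eqI) (simp add: lookup_swap_var)

lemma swap_var_one [simp]: "swap_var i 1 = 1"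
  by (metis one_poly_mapping.abs_eq single_one swap_mon_single swap_var_single zero_poly_mapping_def
      swap_mon_eq_self lookup_zero)

lemma swap_var_mult [simp]: "swap_var i (f * g) = swap_var i f * swap_var i g"
proof (induction f rule: frag_induct)
  case (one x)
  show ?case
  proof (induction g rule: frag_induct)
    case (diff a b)
    then show ?case by (simp add: right_diff_distrib)
  qed (simp_all add: mult_single swap_var_single swap_mon_add)
next
  case (diff a b)
  then show ?case by (simp add: left_diff_distrib)
qed simp_all

lemma swap_var_power [simp]: "swap_var i (f ^ k) = swap_var i f ^ k"
  by (induction k) auto

lemma swap_var_sum [simp]: "swap_var i (sum f A) = (\<Sum>a\<in>A. swap_var i (f a))"
  by (induction A rule: infinite_finite_induct) auto

lemma swap_var_var [simp]: "swap_var i (var k) = var (swap_index i k)"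
  by (simp add: var_def swap_var_single swap_mon_single)

lemma swap_var_commute:
  assumes "Suc i < j"
  shows "swap_var i (swap_var j f) = swap_var j (swap_var i f)"
proof (rule poly_mapping_eqI)
  fix m
  have "swap_mon j (swap_mon i m) = swap_mon i (swap_mon j m)"
    by (rule poly_mapping_eqI) (use assms in \<open>auto simp: lookup_swap_mon swap_index_def\<close>)
  then show "Poly_Mapping.lookup (swap_var i (swap_var j f)) m = Poly_Mapping.lookup (swap_var j (swap_var i f)) m"
    by (simp add: lookup_swap_var)
qed

lemma swap_var_braid:
  "swap_var (Suc i) (swap_var i (swap_var (Suc i) f)) = swap_var i (swap_var (Suc i) (swap_var i f))"
proof (rule poly_mapping_eqI)
  fix m
  have "swap_mon (Suc i) (swap_mon i (swap_mon (Suc i) m)) = swap_mon i (swap_mon (Suc i) (swap_mon i m))"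
    by (rule poly_mapping_eqI) (auto simp: lookup_swap_mon swap_index_def)
  then show "Poly_Mapping.lookup (swap_var (Suc i) (swap_var i (swap_var (Suc i) f))) m
      = Poly_Mapping.lookup (swap_var i (swap_var (Suc i) (swap_var i f))) m"
    by (simp add: lookup_swap_var)
qed

lemma var_power: "var k ^ p = frag_of (Poly_Mapping.single k p)"
  by (induction p) (simp_all add: var_def mult_single single_add[symmetric])

lemma var_eq_iff: "var a = var b \<longleftrightarrow> a = b"
  by (metis frag_of_eq var_def single_one lookup_single_eq lookup_single_not_eq zero_neq_one)

lemma var_diff_nonzero: "var i - var j \<noteq> 0" if "i \<noteq> j"
  using that var_eq_iff by simp

lemma frag_of_eq_mult_var_power:
  "frag_of m = frag_of (Poly_Mapping.update k 0 m) * var k ^ Poly_Mapping.lookup m k"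
proof -
  have "m = Poly_Mapping.update k 0 m + Poly_Mapping.single k (Poly_Mapping.lookup m k)"
    by (rule poly_mapping_eqI) (simp add: lookup_add lookup_update lookup_single when_def)
  then show ?thesis
    by (metis mult_single mult_1 var_power)
qed

lemma diff_dvd_power_alternant:
  fixes x y :: "'a::comm_ring_1"
  shows "x - y dvd x ^ a * y ^ b - y ^ a * x ^ b"
proof -
  have diff_dvd: "x - y dvd x ^ d - y ^ d" for d
    by (metis dvd_triv_left power_diff_sumr2)
  show ?thesis
  proof (cases "b \<le> a")
    case True
    then obtain d where "a = b + d"
      using le_Suc_ex by blast
    then have "x ^ a * y ^ b - y ^ a * x ^ b = (x * y) ^ b * (x ^ d - y ^ d)"
      by (simp add: power_add power_mult_distrib algebra_simps)
    then show ?thesis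
      using diff_dvd by (simp add: dvd_mult)
  next
    case False
    then obtain d where "b = a + d"
      using le_Suc_ex nat_le_linear by blast
    then have "x ^ a * y ^ b - y ^ a * x ^ b = - ((x * y) ^ a * (x ^ d - y ^ d))"
      by (simp add: power_add power_mult_distrib algebra_simps)
    then show ?thesis
      using diff_dvd by (simp add: dvd_mult)
  qed
qed

lemma var_diff_dvd_swap_var_diff: "var i - var (Suc i) dvd f - swap_var i f"
proof (induction f rule: frag_induct)
  case (one m)
  define m0 where "m0 = Poly_Mapping.update (Suc i) 0 (Poly_Mapping.update i 0 m)"
  define a b where "a = Poly_Mapping.lookup m i" and "b = Poly_Mapping.lookup m (Suc i)"
  have m: "frag_of m = frag_of m0 * var i ^ a * var (Suc i) ^ b"
    using frag_of_eq_mult_var_power[of m i] frag_of_eq_mult_var_power[of "Poly_Mapping.update i 0 m" "Suc i"]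
    by (simp add: m0_def a_def b_def lookup_update ac_simps)
  have "swap_var i (frag_of m0) = frag_of m0"
    by (simp add: swap_var_single swap_mon_eq_self m0_def lookup_update)
  then have "frag_of m - swap_var i (frag_of m)
      = frag_of m0 * (var i ^ a * var (Suc i) ^ b - var (Suc i) ^ a * var i ^ b)"
    by (simp add: m algebra_simps)
  then show ?case
    by (simp add: diff_dvd_power_alternant)
next
  case (diff f g)
  then have "var i - var (Suc i) dvd (f - swap_var i f) - (g - swap_var i g)"
    by (rule dvd_diff)
  then show ?case
    by (simp add: algebra_simps)
qed simp

section \<open>Demazure--Lascoux operators\<close>

lemma ddiff_mult_var_diff: "ddiff i f * (var i - var (Suc i)) = f - swap_var i f"
proof -
  have "\<exists>!q. q * (var i - var (Suc i)) = f - swap_var i f"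
    using var_diff_dvd_swap_var_diff[of i f] var_diff_nonzero[of i "Suc i"]
    by (metis dvd_def mult.commute mult_right_cancel n_not_Suc_n)
  then show ?thesis
    unfolding ddiff_def by (rule theI')
qed

definition dl_weight :: "nat \<Rightarrow> bpoly" where
  "dl_weight i = var i + beta * var i * var (Suc i)"

lemma dl_pi_mult_var_diff: "dl_pi i f * (var i - var (Suc i)) = dl_weight i * f - swap_var i (dl_weight i * f)"
proof -
  have "dl_pi i f = ddiff i (dl_weight i * f)"
    by (simp add: dl_pi_def dl_weight_def algebra_simps)
  then show ?thesis
    by (simp add: ddiff_mult_var_diff)
qed

lemma dl_pi_unique:
  "q * (var i - var (Suc i)) = dl_weight i * f - swap_var i (dl_weight i * f) \<Longrightarrow> dl_pi i f = q"
  using dl_pi_mult_var_diff[of i f] var_diff_nonzero[of i "Suc i"] by (metis mult_right_cancel n_not_Suc_n)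

lemma dl_pi_add [simp]: "dl_pi i (f + g) = dl_pi i f + dl_pi i g"
  by (rule dl_pi_unique) (simp only: distrib_right dl_pi_mult_var_diff, simp add: algebra_simps)

lemma dl_pi_diff [simp]: "dl_pi i (f - g) = dl_pi i f - dl_pi i g"
  by (rule dl_pi_unique) (simp only: left_diff_distrib dl_pi_mult_var_diff, simp add: algebra_simps)

lemma dl_pi_zero [simp]: "dl_pi i 0 = 0"
  by (rule dl_pi_unique) simp

lemma dl_pi_sum: "dl_pi i (sum f A) = (\<Sum>a\<in>A. dl_pi i (f a))"
  by (induction A rule: infinite_finite_induct) auto

lemma dl_pi_mult_symmetric:
  assumes "swap_var i h = h"
  shows "dl_pi i (h * f) = h * dl_pi i f"
proof (rule dl_pi_unique)
  have "h * dl_pi i f * (var i - var (Suc i)) = h * (dl_weight i * f - swap_var i (dl_weight i * f))"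
    by (simp add: dl_pi_mult_var_diff flip: mult.assoc)
  also have "\<dots> = dl_weight i * (h * f) - swap_var i (dl_weight i * (h * f))"
    using assms by (simp add: algebra_simps)
  finally show "h * dl_pi i f * (var i - var (Suc i)) = dl_weight i * (h * f) - swap_var i (dl_weight i * (h * f))" .
qed

lemma swap_var_dl_pi [simp]: "swap_var i (dl_pi i f) = dl_pi i f"
proof -
  have "swap_var i (dl_pi i f * (var i - var (Suc i))) = - (dl_pi i f * (var i - var (Suc i)))"
    by (simp only: dl_pi_mult_var_diff) simp
  then have "swap_var i (dl_pi i f) * (var i - var (Suc i)) = dl_pi i f * (var i - var (Suc i))"
    by (simp add: algebra_simps)
  then show ?thesis
    using var_diff_nonzero[of i "Suc i"] by simp
qed

lemma dl_pi_kernel_mult_symmetric: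
  assumes "0 < i" "swap_var i h = h"
  shows "dl_pi i (var (Suc i) * (1 + beta * var i) * h) = 0"
  by (rule dl_pi_unique) (use assms in \<open>simp add: dl_weight_def algebra_simps\<close>)

lemma demazure_composition_expansion:
  fixes s t P Q :: "'a::comm_ring_1 \<Rightarrow> 'a"
  assumes s_mult: "\<And>x y. s (x * y) = s x * s y" and s_diff: "\<And>x y. s (x - y) = s x - s y"
    and P: "\<And>f. P f * D = w * f - s w * s f" and Q: "\<And>f. Q f * E = v * f - t v * t f"
    and "s E = E" "s v = v" "s (t v) = t v"
  shows "P (Q g) * (D * E) = w * (v * g - t v * t g) - s w * (v * s g - t v * s (t g))"
proof -
  have "P (Q g) * (D * E) = (P (Q g) * D) * E"
    by (simp only: mult.assoc)
  also have "\<dots> = w * (Q g * E) - s w * s (Q g * E)"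
    by (simp only: P s_mult \<open>s E = E\<close>) (simp add: algebra_simps)
  also have "\<dots> = w * (v * g - t v * t g) - s w * (v * s g - t v * s (t g))"
    using assms(5-7) by (simp add: Q s_mult s_diff)
  finally show ?thesis .
qed

lemma demazure_triple_expansion:
  fixes s t P Q :: "'a::comm_ring_1 \<Rightarrow> 'a"
  assumes s_mult: "\<And>x y. s (x * y) = s x * s y" and s_diff: "\<And>x y. s (x - y) = s x - s y"
    and t_mult: "\<And>x y. t (x * y) = t x * t y" and t_diff: "\<And>x y. t (x - y) = t x - t y"
    and P: "\<And>f. P f * D = w * f - s w * s f" and P_sym: "\<And>f. s (P f) = P f"
    and Q: "\<And>f. Q f * E = v * f - t v * t f"
  shows "P (Q (P g)) * (D * E * s E * D * t D * s (t D)) =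
    w * s E * (v * t D * s (t D) * (w * g - s w * s g)
               - t v * D * s (t D) * (t w * t g - t (s w) * t (s g)))
    - s w * E * (s v * t D * s (t D) * (w * g - s w * s g)
                 - s (t v) * D * t D * (s (t w) * s (t g) - s (t (s w)) * s (t (s g))))"
proof -
  have a: "P g * D = w * g - s w * s g"
    by (rule P)
  have ta: "t (P g) * t D = t w * t g - t (s w) * t (s g)"
    using arg_cong[OF a, of t] by (simp add: t_mult t_diff)
  have sta: "s (t (P g)) * s (t D) = s (t w) * s (t g) - s (t (s w)) * s (t (s g))"
    using arg_cong[OF ta, of s] by (simp add: s_mult s_diff)
  have b: "Q (P g) * E = v * P g - t v * t (P g)"
    by (rule Q)
  have sb: "s (Q (P g)) * s E = s v * P g - s (t v) * s (t (P g))"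
    using arg_cong[OF b, of s] by (simp add: s_mult s_diff P_sym)
  have c: "P (Q (P g)) * D = w * Q (P g) - s w * s (Q (P g))"
    by (rule P)
  have "P (Q (P g)) * D * E * s E = (w * Q (P g) - s w * s (Q (P g))) * E * s E"
    by (simp only: c)
  also have "\<dots> = w * s E * (Q (P g) * E) - s w * E * (s (Q (P g)) * s E)"
    by (simp add: algebra_simps)
  finally have "P (Q (P g)) * D * E * s E
      = w * s E * (v * P g - t v * t (P g)) - s w * E * (s v * P g - s (t v) * s (t (P g)))"
    by (simp only: b sb)
  then have "P (Q (P g)) * (D * E * s E * D * t D * s (t D)) =
    (w * s E * (v * P g - t v * t (P g)) - s w * E * (s v * P g - s (t v) * s (t (P g))))
      * (D * t D * s (t D))"
    by (metis mult.assoc)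
  also have "\<dots> = w * s E * (v * t D * s (t D) * (P g * D) - t v * D * s (t D) * (t (P g) * t D))
    - s w * E * (s v * t D * s (t D) * (P g * D) - s (t v) * D * t D * (s (t (P g)) * s (t D)))"
    by (simp add: algebra_simps)
  finally show ?thesis
    by (simp only: a ta sta)
qed

lemma dl_pi_commute:
  assumes "0 < i" "Suc i < j"
  shows "dl_pi i (dl_pi j g) = dl_pi j (dl_pi i g)"
proof -
  define Di Dj where "Di = var i - var (Suc i)" and "Dj = var j - var (Suc j)"
  have ij: "dl_pi i (dl_pi j g) * (Di * Dj) = dl_weight i * (dl_weight j * g - swap_var j (dl_weight j) * swap_var j g)
      - swap_var i (dl_weight i) * (dl_weight j * swap_var i g - swap_var j (dl_weight j) * swap_var i (swap_var j g))"
    by (rule demazure_composition_expansion) (use assms in \<open>simp_all add: Di_def Dj_def dl_pi_mult_var_diff dl_weight_def\<close>)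
  have ji: "dl_pi j (dl_pi i g) * (Dj * Di) = dl_weight j * (dl_weight i * g - swap_var i (dl_weight i) * swap_var i g)
      - swap_var j (dl_weight j) * (dl_weight i * swap_var j g - swap_var i (dl_weight i) * swap_var j (swap_var i g))"
    by (rule demazure_composition_expansion) (use assms in \<open>simp_all add: Di_def Dj_def dl_pi_mult_var_diff dl_weight_def\<close>)
  have "dl_pi i (dl_pi j g) * (Di * Dj) = dl_pi j (dl_pi i g) * (Dj * Di)"
    unfolding ij ji swap_var_commute[OF assms(2)] by algebra
  moreover have "Di * Dj \<noteq> 0"
    using assms by (simp add: Di_def Dj_def var_eq_iff)
  ultimately show ?thesis
    by (metis mult.commute mult_right_cancel)
qed

lemma dl_pi_braid:
  assumes "0 < i"
  shows "dl_pi i (dl_pi (Suc i) (dl_pi i g)) = dl_pi (Suc i) (dl_pi i (dl_pi (Suc i) g))"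
proof -
  define X Y Z where "X = var i" and "Y = var (Suc i)" and "Z = var (Suc (Suc i))"
  define s t where "s = swap_var i" and "t = swap_var (Suc i)"
  have swaps [simp]: "s X = Y" "s Y = X" "s Z = Z" "s beta = beta"
    "t X = X" "t Y = Z" "t Z = Y" "t beta = beta"
    using assms by (simp_all add: X_def Y_def Z_def s_def t_def)
  have hom: "s (x * y) = s x * s y" "s (x - y) = s x - s y" "t (x * y) = t x * t y" "t (x - y) = t x - t y"
    "s (x + y) = s x + s y" "t (x + y) = t x + t y" for x y
    by (simp_all add: s_def t_def)
  have Pi: "dl_pi i f * (X - Y) = (X + beta * X * Y) * f - s (X + beta * X * Y) * s f" for f
    using dl_pi_mult_var_diff[of i f] by (simp add: X_def Y_def s_def dl_weight_def)
  have Pj: "dl_pi (Suc i) f * (Y - Z) = (Y + beta * Y * Z) * f - t (Y + beta * Y * Z) * t f" for f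
    using dl_pi_mult_var_diff[of "Suc i" f] by (simp add: Y_def Z_def t_def dl_weight_def)
  have sym: "s (dl_pi i f) = dl_pi i f" "t (dl_pi (Suc i) f) = dl_pi (Suc i) f" for f
    by (simp_all add: s_def t_def)
  have left: "dl_pi i (dl_pi (Suc i) (dl_pi i g)) * ((X - Y) * (Y - Z) * (X - Z) * (X - Y) * (X - Z) * (Y - Z)) =
    (X + beta * X * Y) * (X - Z) * ((Y + beta * Y * Z) * (X - Z) * (Y - Z) * ((X + beta * X * Y) * g - (Y + beta * Y * X) * s g)
               - (Z + beta * Z * Y) * (X - Y) * (Y - Z) * ((X + beta * X * Z) * t g - (Z + beta * Z * X) * t (s g)))
    - (Y + beta * Y * X) * (Y - Z) * ((X + beta * X * Z) * (X - Z) * (Y - Z) * ((X + beta * X * Y) * g - (Y + beta * Y * X) * s g)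
                 - (Z + beta * Z * X) * (X - Y) * (X - Z) * ((Y + beta * Y * Z) * s (t g) - (Z + beta * Z * Y) * s (t (s g))))"
    using demazure_triple_expansion[OF hom(1-4) Pi sym(1) Pj, of g] by (simp add: hom)
  have right: "dl_pi (Suc i) (dl_pi i (dl_pi (Suc i) g)) * ((Y - Z) * (X - Y) * (X - Z) * (Y - Z) * (X - Z) * (X - Y)) =
    (Y + beta * Y * Z) * (X - Z) * ((X + beta * X * Y) * (X - Z) * (X - Y) * ((Y + beta * Y * Z) * g - (Z + beta * Z * Y) * t g)
               - (Y + beta * Y * X) * (Y - Z) * (X - Y) * ((X + beta * X * Z) * s g - (Z + beta * Z * X) * s (t g)))
    - (Z + beta * Z * Y) * (X - Y) * ((X + beta * X * Z) * (X - Z) * (X - Y) * ((Y + beta * Y * Z) * g - (Z + beta * Z * Y) * t g)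
                 - (Z + beta * Z * X) * (Y - Z) * (X - Z) * ((X + beta * X * Y) * t (s g) - (Y + beta * Y * X) * t (s (t g))))"
    using demazure_triple_expansion[OF hom(3,4,1,2) Pj sym(2) Pi, of g] by (simp add: hom)
  have braid: "t (s (t g)) = s (t (s g))"
    unfolding s_def t_def by (rule swap_var_braid)
  have "dl_pi i (dl_pi (Suc i) (dl_pi i g)) * ((X - Y) * (Y - Z) * (X - Z) * (X - Y) * (X - Z) * (Y - Z))
      = dl_pi (Suc i) (dl_pi i (dl_pi (Suc i) g)) * ((Y - Z) * (X - Y) * (X - Z) * (Y - Z) * (X - Z) * (X - Y))"
    unfolding left right braid by algebra
  moreover have "(Y - Z) * (X - Y) * (X - Z) * (Y - Z) * (X - Z) * (X - Y)
      = (X - Y) * (Y - Z) * (X - Z) * (X - Y) * (X - Z) * (Y - Z)"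
    by (simp only: ac_simps)
  moreover have "(X - Y) * (Y - Z) * (X - Z) * (X - Y) * (X - Z) * (Y - Z) \<noteq> 0"
    by (simp add: X_def Y_def Z_def var_eq_iff)
  ultimately show ?thesis
    by simp
qed

lemma dl_word_Nil [simp]: "dl_word [] f = f"
  by (simp add: dl_word_def)

lemma dl_word_Cons [simp]: "dl_word (i # ws) f = dl_pi i (dl_word ws f)"
  by (simp add: dl_word_def)

lemma dl_word_append: "dl_word (us @ ws) f = dl_word us (dl_word ws f)"
  by (simp add: dl_word_def)

lemma dl_word_zero [simp]: "dl_word ws 0 = 0"
  by (induction ws) auto

lemma dl_word_sum: "dl_word ws (sum f A) = (\<Sum>a\<in>A. dl_word ws (f a))"
  by (induction ws) (auto simp: dl_pi_sum)

lemma dl_pi_dl_word_commute: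
  assumes "\<And>k. k \<in> set ws \<Longrightarrow> 0 < i \<and> Suc i < k \<or> 0 < k \<and> Suc k < i"
  shows "dl_pi i (dl_word ws f) = dl_word ws (dl_pi i f)"
  using assms
proof (induction ws)
  case (Cons k ws)
  have "dl_pi i (dl_pi k g) = dl_pi k (dl_pi i g)" for g
    using Cons.prems[of k] dl_pi_commute[of i k g] dl_pi_commute[of k i g] by auto
  then show ?case
    using Cons by simp
qed simp

lemma c_word_Suc: "c_word (Suc k) = Suc k # c_word k"
  by (simp add: c_word_def)

lemma c_word_split:
  assumes "j \<le> k"
  shows "c_word k = rev [Suc j..<Suc k] @ c_word j"
proof -
  have "[1..<Suc k] = [1..<Suc j] @ [Suc j..<Suc k]"
    using assms upt_add_eq_append[of 1 "Suc j" "k - j"] by simp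
  then show ?thesis
    by (simp add: c_word_def)
qed

lemma dl_pi_c_word_shift:
  "0 < p \<Longrightarrow> p < k \<Longrightarrow> dl_pi p (dl_word (c_word k) f) = dl_word (c_word k) (dl_pi (Suc p) f)"
proof (induction k)
  case (Suc k)
  show ?case
  proof (cases "p = k")
    case True
    then obtain q where q: "k = Suc q"
      using Suc.prems by (cases k) auto
    have "dl_pi p (dl_word (c_word (Suc k)) f) = dl_pi p (dl_pi (Suc p) (dl_pi p (dl_word (c_word q) f)))"
      using True q by (simp add: c_word_Suc)
    also have "\<dots> = dl_pi (Suc p) (dl_pi p (dl_pi (Suc p) (dl_word (c_word q) f)))"
      using Suc.prems by (simp add: dl_pi_braid)
    also have "\<dots> = dl_pi (Suc p) (dl_pi p (dl_word (c_word q) (dl_pi (Suc p) f)))"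
      using True q by (subst dl_pi_dl_word_commute) (auto simp: c_word_def)
    also have "\<dots> = dl_word (c_word (Suc k)) (dl_pi (Suc p) f)"
      using True q by (simp add: c_word_Suc)
    finally show ?thesis .
  next
    case False
    then have "dl_pi p (dl_word (c_word (Suc k)) f) = dl_pi (Suc k) (dl_pi p (dl_word (c_word k) f))"
      using Suc.prems dl_pi_commute[of p "Suc k"] by (simp add: c_word_Suc)
    then show ?thesis
      using False Suc by (simp add: c_word_Suc)
  qed
qed simp

lemma dl_word_c_word_eq_0:
  assumes "0 < k" "dl_pi 1 f = 0"
  shows "dl_word (c_word k) f = 0"
proof -
  have "dl_word (c_word k) f = dl_word (rev [Suc 1..<Suc k]) (dl_word (c_word 1) f)"
    using c_word_split[of 1 k] assms(1) by (simp add: dl_word_append)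
  then show ?thesis
    using assms(2) by (simp add: c_word_def)
qed

lemma w0_word_Suc: "w0_word (Suc n) = w0_word n @ c_word (n - 1)"
  by (cases n) (auto simp: w0_word_def c_word_def)

lemma dl_word_w0_word_eq_0:
  "0 < i \<Longrightarrow> Suc i < n \<Longrightarrow> dl_pi i f = 0 \<Longrightarrow> dl_word (w0_word n) f = 0"
proof (induction n arbitrary: i f)
  case (Suc n)
  show ?case
  proof (cases "i = 1")
    case True
    then show ?thesis
      using Suc.prems by (simp add: w0_word_Suc dl_word_append dl_word_c_word_eq_0)
  next
    case False
    then obtain p where p: "i = Suc p" "0 < p"
      using Suc.prems by (cases i) auto
    then have "dl_pi p (dl_word (c_word (n - 1)) f) = 0"
      using Suc.prems by (simp add: dl_pi_c_word_shift)
    then show ?thesis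
      using Suc.IH[of p] Suc.prems p by (simp add: w0_word_Suc dl_word_append)
  qed
qed simp

section \<open>Selecting terms by their exponents\<close>

definition filter_terms :: "((nat \<Rightarrow>\<^sub>0 nat) \<Rightarrow> bool) \<Rightarrow> bpoly \<Rightarrow> bpoly" where
  "filter_terms P f = Abs_poly_mapping (\<lambda>m. if P m then Poly_Mapping.lookup f m else 0)"

lemma lookup_filter_terms:
  "Poly_Mapping.lookup (filter_terms P f) m = (if P m then Poly_Mapping.lookup f m else 0)"
proof -
  have "finite {m. (if P m then Poly_Mapping.lookup f m else 0) \<noteq> 0}"
    by (rule finite_subset[OF _ finite_keys[of f]]) (auto simp: in_keys_iff)
  then show ?thesis
    by (simp add: filter_terms_def lookup_Abs_poly_mapping)
qed

lemma nonalt_part_eq_filter_terms: "nonalt_part n lam p = filter_terms (\<lambda>m. \<not> alternating n lam m) p"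
  unfolding nonalt_part_def filter_terms_def by (rule arg_cong[where f = Abs_poly_mapping]) auto

lemma filter_terms_add [simp]: "filter_terms P (f + g) = filter_terms P f + filter_terms P g"
  by (rule poly_mapping_eqI) (simp add: lookup_filter_terms lookup_add)

lemma filter_terms_diff [simp]: "filter_terms P (f - g) = filter_terms P f - filter_terms P g"
  by (rule poly_mapping_eqI) (simp add: lookup_filter_terms lookup_minus)

lemma filter_terms_zero [simp]: "filter_terms P 0 = 0"
  by (rule poly_mapping_eqI) (simp add: lookup_filter_terms)

lemma filter_terms_sum: "filter_terms P (sum f A) = (\<Sum>a\<in>A. filter_terms P (f a))"
  by (induction A rule: infinite_finite_induct) auto

lemma filter_terms_single:
  "filter_terms P (Poly_Mapping.single m c) = (if P m then Poly_Mapping.single m c else 0)"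
  by (rule poly_mapping_eqI) (auto simp: lookup_filter_terms lookup_single when_def)

lemma filter_terms_filter_terms: "filter_terms P (filter_terms Q f) = filter_terms (\<lambda>m. P m \<and> Q m) f"
  by (rule poly_mapping_eqI) (simp add: lookup_filter_terms)

lemma filter_terms_eq_0: "(\<And>m. m \<in> Poly_Mapping.keys f \<Longrightarrow> \<not> P m) \<Longrightarrow> filter_terms P f = 0"
  by (rule poly_mapping_eqI) (auto simp: lookup_filter_terms in_keys_iff)

definition depends_only_on :: "nat set \<Rightarrow> ((nat \<Rightarrow>\<^sub>0 nat) \<Rightarrow> bool) \<Rightarrow> bool" where
  "depends_only_on V P \<longleftrightarrow>
     (\<forall>m m'. (\<forall>k\<in>V. Poly_Mapping.lookup m k = Poly_Mapping.lookup m' k) \<longrightarrow> P m = P m')"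

definition free_of :: "nat set \<Rightarrow> bpoly \<Rightarrow> bool" where
  "free_of V h \<longleftrightarrow> (\<forall>m\<in>Poly_Mapping.keys h. \<forall>k\<in>V. Poly_Mapping.lookup m k = 0)"

lemma free_of_subset: "free_of V h \<Longrightarrow> W \<subseteq> V \<Longrightarrow> free_of W h"
  unfolding free_of_def by blast

lemma free_of_frag_of: "(\<And>k. k \<in> V \<Longrightarrow> Poly_Mapping.lookup m k = 0) \<Longrightarrow> free_of V (frag_of m)"
  by (simp add: free_of_def)

lemma free_of_var: "k \<notin> V \<Longrightarrow> free_of V (var k)"
  by (auto simp: free_of_def var_def lookup_single when_def)

lemma free_of_one: "free_of V 1"
  by (simp add: free_of_def)

lemma free_of_add: "free_of V a \<Longrightarrow> free_of V b \<Longrightarrow> free_of V (a + b)"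
  unfolding free_of_def using keys_add[of a b] by blast

lemma free_of_diff: "free_of V a \<Longrightarrow> free_of V b \<Longrightarrow> free_of V (a - b)"
  unfolding free_of_def using keys_diff[of a b] by blast

lemma free_of_mult: "free_of V a \<Longrightarrow> free_of V b \<Longrightarrow> free_of V (a * b)"
  unfolding free_of_def using keys_mult[of a b] by (force simp: lookup_add)

lemma free_of_power: "free_of V a \<Longrightarrow> free_of V (a ^ k)"
  by (induction k) (simp_all add: free_of_one free_of_mult)

lemma filter_terms_mult_free_of:
  assumes "depends_only_on V P" "free_of V h"
  shows "filter_terms P (h * f) = h * filter_terms P f"
proof (induction f rule: frag_induct)
  case (one x)
  have "Poly_Mapping.keys h \<subseteq> {m. \<forall>k\<in>V. Poly_Mapping.lookup m k = 0}"
    using assms(2) by (auto simp: free_of_def)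
  then show ?case
  proof (induction h rule: frag_induction)
    case (one y)
    then have "P (y + x) = P x"
      using assms(1) by (simp add: depends_only_on_def lookup_add)
    then show ?case
      by (simp add: mult_single filter_terms_single)
  next
    case (diff a b)
    then show ?case
      by (simp add: left_diff_distrib)
  qed simp
next
  case (diff a b)
  then show ?case
    by (simp add: right_diff_distrib)
qed simp

lemma swap_var_free_of:
  assumes "free_of {i, Suc i} h"
  shows "swap_var i h = h"
proof (rule poly_mapping_eqI)
  fix m
  have fixed: "swap_mon i m' = m'" if "m' \<in> Poly_Mapping.keys h" for m'
    using assms that by (intro swap_mon_eq_self) (auto simp: free_of_def)
  show "Poly_Mapping.lookup (swap_var i h) m = Poly_Mapping.lookup h m"
  proof (cases "swap_mon i m \<in> Poly_Mapping.keys h")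
    case True
    then show ?thesis
      using fixed[OF True] by (simp add: lookup_swap_var)
  next
    case False
    then have "m \<notin> Poly_Mapping.keys h"
      using fixed by force
    then show ?thesis
      using False by (simp add: lookup_swap_var in_keys_iff)
  qed
qed

lemma filter_terms_swap_var:
  assumes "depends_only_on V P" "i \<notin> V" "Suc i \<notin> V"
  shows "filter_terms P (swap_var i f) = swap_var i (filter_terms P f)"
proof -
  have "P (swap_mon i m) = P m" for m
    using assms unfolding depends_only_on_def
    by (metis lookup_swap_mon swap_index_simps(3))
  then show ?thesis
    by (intro poly_mapping_eqI) (simp add: lookup_filter_terms lookup_swap_var)
qed

lemma filter_terms_dl_pi:
  assumes "depends_only_on V P" "0 \<notin> V" "i \<notin> V" "Suc i \<notin> V"
  shows "filter_terms P (dl_pi i f) = dl_pi i (filter_terms P f)"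
proof (rule sym, rule dl_pi_unique)
  have free: "free_of V (var i - var (Suc i))" "free_of V (dl_weight i)"
    using assms unfolding dl_weight_def by (auto intro!: free_of_diff free_of_add free_of_mult free_of_var)
  have "filter_terms P (dl_pi i f) * (var i - var (Suc i))
      = filter_terms P (dl_pi i f * (var i - var (Suc i)))"
    using filter_terms_mult_free_of[OF assms(1) free(1)] by (simp add: mult.commute)
  also have "\<dots> = dl_weight i * filter_terms P f - swap_var i (dl_weight i * filter_terms P f)"
    by (simp only: dl_pi_mult_var_diff filter_terms_diff filter_terms_swap_var[OF assms(1,3,4)]
        filter_terms_mult_free_of[OF assms(1) free(2)])
  finally show "filter_terms P (dl_pi i f) * (var i - var (Suc i))
      = dl_weight i * filter_terms P f - swap_var i (dl_weight i * filter_terms P f)" .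
qed

lemma filter_terms_dl_word:
  assumes "depends_only_on V P" "0 \<notin> V" "\<And>k. k \<in> set ws \<Longrightarrow> k \<notin> V \<and> Suc k \<notin> V"
  shows "filter_terms P (dl_word ws f) = dl_word ws (filter_terms P f)"
  using assms(3) by (induction ws) (simp_all add: filter_terms_dl_pi[OF assms(1,2)])

lemma filter_terms_var_power_mult:
  assumes "free_of {j} h"
  shows "filter_terms (\<lambda>m. Q (Poly_Mapping.lookup m j)) (var j ^ q * h) = (if Q q then var j ^ q * h else 0)"
proof -
  have "Poly_Mapping.keys h \<subseteq> {m. Poly_Mapping.lookup m j = 0}"
    using assms by (auto simp: free_of_def)
  then show ?thesis
  proof (induction h rule: frag_induction)
    case (one x)
    then show ?case
      by (simp add: var_power mult_single filter_terms_single lookup_add)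
  next
    case (diff a b)
    then show ?case
      by (simp add: right_diff_distrib)
  qed simp
qed

section \<open>Two- and three-variable computations\<close>

(* hsum X Y n is the complete homogeneous polynomial h_{n-1}(X, Y). *)
definition hsum :: "'a::comm_semiring_1 \<Rightarrow> 'a \<Rightarrow> nat \<Rightarrow> 'a" where
  "hsum X Y n = (\<Sum>k<n. X ^ (n - Suc k) * Y ^ k)"

lemma hsum_commute: "hsum Y X n = hsum X Y n"
proof -
  have "hsum Y X n = (\<Sum>k<n. Y ^ (n - Suc (n - Suc k)) * X ^ (n - Suc k))"
    unfolding hsum_def by (rule sum.nat_diff_reindex[symmetric])
  also have "\<dots> = hsum X Y n"
    unfolding hsum_def by (rule sum.cong) (auto simp: mult.commute Suc_diff_Suc)
  finally show ?thesis .
qed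

lemma hsum_mult_diff:
  fixes X Y :: "'a::comm_ring_1"
  shows "hsum X Y n * (X - Y) = X ^ n - Y ^ n"
  using power_diff_sumr2[of X n Y] hsum_commute[of X Y n] by (simp add: hsum_def mult.commute)

lemma sum_power_hsum_eq:
  fixes X Y Z :: "'a::comm_semiring_1"
  shows "(\<Sum>k<d. X ^ (d - Suc k) * hsum Y Z (Suc k)) = (\<Sum>l<d. Z ^ l * hsum X Y (d - l))"
proof -
  have triangle: "(\<Sum>k<d. \<Sum>l<Suc k. A k l) = (\<Sum>l<d. \<Sum>q<d - l. A (l + q) l)" for A :: "nat \<Rightarrow> nat \<Rightarrow> 'a"
  proof (induction d)
    case (Suc d)
    have "(\<Sum>l<Suc d. \<Sum>q<Suc d - l. A (l + q) l) = (\<Sum>l<Suc d. \<Sum>q<d - l. A (l + q) l) + (\<Sum>l<Suc d. A d l)"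
      by (subst sum.distrib[symmetric]) (rule sum.cong, auto simp: Suc_diff_le)
    then show ?case
      using Suc by simp
  qed simp
  have "(\<Sum>k<d. X ^ (d - Suc k) * hsum Y Z (Suc k)) = (\<Sum>k<d. \<Sum>l<Suc k. X ^ (d - Suc k) * Y ^ (k - l) * Z ^ l)"
    unfolding hsum_def sum_distrib_left by (simp add: mult.assoc)
  also have "\<dots> = (\<Sum>l<d. \<Sum>q<d - l. X ^ (d - Suc (l + q)) * Y ^ (l + q - l) * Z ^ l)"
    by (rule triangle)
  also have "\<dots> = (\<Sum>l<d. Z ^ l * hsum X Y (d - l))"
    by (simp add: hsum_def sum_distrib_left ac_simps)
  finally show ?thesis .
qed

lemma swap_var_hsum: "swap_var i (hsum f g n) = hsum (swap_var i f) (swap_var i g) n"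
  by (simp add: hsum_def)

lemma dl_pi_var_power_pair:
  assumes "0 < i"
  shows "dl_pi i (var i ^ (b + d) * var (Suc i) ^ b) = (var i * var (Suc i)) ^ b *
    (hsum (var i) (var (Suc i)) (Suc d) + beta * var i * var (Suc i) * hsum (var i) (var (Suc i)) d)"
proof (rule dl_pi_unique)
  define X Y where "X = var i" and "Y = var (Suc i)"
  have "(X * Y) ^ b * (hsum X Y (Suc d) + beta * X * Y * hsum X Y d) * (X - Y)
      = (X * Y) ^ b * (hsum X Y (Suc d) * (X - Y) + beta * X * Y * (hsum X Y d * (X - Y)))"
    by (simp add: algebra_simps)
  also have "\<dots> = (X * Y) ^ b * (X ^ Suc d - Y ^ Suc d + beta * X * Y * (X ^ d - Y ^ d))"
    by (simp only: hsum_mult_diff)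
  also have "\<dots> = dl_weight i * (X ^ (b + d) * Y ^ b) - swap_var i (dl_weight i * (X ^ (b + d) * Y ^ b))"
    using assms by (simp add: X_def Y_def dl_weight_def power_add power_mult_distrib algebra_simps)
  finally show "(X * Y) ^ b * (hsum X Y (Suc d) + beta * X * Y * hsum X Y d) * (X - Y)
      = dl_weight i * (X ^ (b + d) * Y ^ b) - swap_var i (dl_weight i * (X ^ (b + d) * Y ^ b))" .
qed

lemma dl_pi_monomial_expansion:
  assumes "0 < i" "free_of {i, Suc i} R"
  shows "dl_pi i (R * var i ^ (b + d) * var (Suc i) ^ b)
    = (\<Sum>k<Suc d. R * var i ^ (b + (d - k)) * var (Suc i) ^ (b + k))
      + (\<Sum>k<d. R * beta * var i ^ (Suc b + (d - Suc k)) * var (Suc i) ^ (Suc b + k))"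
proof -
  define X Y where "X = var i" and "Y = var (Suc i)"
  have "dl_pi i (R * X ^ (b + d) * Y ^ b) = R * dl_pi i (X ^ (b + d) * Y ^ b)"
    using assms(2) by (simp add: dl_pi_mult_symmetric swap_var_free_of mult.assoc)
  also have "\<dots> = R * (X * Y) ^ b * hsum X Y (Suc d) + R * (X * Y) ^ b * (beta * X * Y * hsum X Y d)"
    using dl_pi_var_power_pair[OF assms(1), of b d] by (simp only: X_def Y_def distrib_left mult.assoc)
  also have "\<dots> = (\<Sum>k<Suc d. R * X ^ (b + (d - k)) * Y ^ (b + k))
      + (\<Sum>k<d. R * beta * X ^ (Suc b + (d - Suc k)) * Y ^ (Suc b + k))"
    unfolding hsum_def sum_distrib_left
  proof (intro arg_cong2[where f = "(+)"] sum.cong refl)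
    fix k assume "k \<in> {..<Suc d}"
    then obtain r where "d = k + r"
      using le_Suc_ex[of k d] by auto
    then show "R * (X * Y) ^ b * (X ^ (Suc d - Suc k) * Y ^ k) = R * X ^ (b + (d - k)) * Y ^ (b + k)"
      by (simp add: power_add power_mult_distrib ac_simps)
  next
    fix k assume "k \<in> {..<d}"
    then obtain r where "d = Suc (k + r)"
      using less_iff_Suc_add by auto
    then show "R * (X * Y) ^ b * (beta * X * Y * (X ^ (d - Suc k) * Y ^ k))
        = R * beta * X ^ (Suc b + (d - Suc k)) * Y ^ (Suc b + k)"
      by (simp add: power_add power_mult_distrib ac_simps)
  qed
  finally show ?thesis
    unfolding X_def Y_def .
qed

lemma sum_lessThan_if_less:
  assumes "k \<le> (n::nat)"
  shows "(\<Sum>l<n. if l < k then f l else 0) = (\<Sum>l<k. f l)"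
proof -
  have "{l \<in> {..<n}. l < k} = {..<k}"
    using assms by auto
  then show ?thesis
    by (simp flip: sum.inter_filter)
qed

lemma filter_terms_dl_pi_var_power_pair:
  assumes "0 < j" "free_of {j, Suc j} h"
  shows "filter_terms (\<lambda>m. \<not> (c \<le> Poly_Mapping.lookup m j \<and> Poly_Mapping.lookup m j \<le> c + e))
      (dl_pi j (h * var j ^ (c + (e + k)) * var (Suc j) ^ c))
    = h * ((1 + beta * var (Suc j)) * var j ^ Suc (c + e) * var (Suc j) ^ c * hsum (var j) (var (Suc j)) k)"
proof -
  define Y Z where "Y = var j" and "Z = var (Suc j)"
  define Q where "Q p \<longleftrightarrow> \<not> (c \<le> p \<and> p \<le> c + e)" for p
  define u where "u l = Y ^ (c + (e + k - l)) * (h * Z ^ (c + l))" for l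
  define v where "v l = Y ^ (Suc c + (e + k - Suc l)) * (h * beta * Z ^ (Suc c + l))" for l
  have pi: "dl_pi j (h * Y ^ (c + (e + k)) * Z ^ c) = (\<Sum>l<Suc (e + k). u l) + (\<Sum>l<e + k. v l)"
    unfolding Y_def Z_def u_def v_def dl_pi_monomial_expansion[OF assms] by (simp only: ac_simps)
  have "free_of {j} h"
    using assms(2) by (rule free_of_subset) auto
  moreover have "free_of {j} Z" "free_of {j} beta"
    using assms(1) by (simp_all add: Z_def free_of_var)
  ultimately have free: "free_of {j} (h * Z ^ p)" "free_of {j} (h * beta * Z ^ p)" for p
    by (simp_all add: free_of_mult free_of_power)
  have "filter_terms (\<lambda>m. Q (Poly_Mapping.lookup m j)) (u l) = (if l < k then u l else 0)"
    if "l < Suc (e + k)" for l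
  proof -
    have "Q (c + (e + k - l)) \<longleftrightarrow> l < k"
      using that by (auto simp: Q_def)
    then show ?thesis
      unfolding u_def Y_def by (simp only: filter_terms_var_power_mult[OF free(1)])
  qed
  moreover have "filter_terms (\<lambda>m. Q (Poly_Mapping.lookup m j)) (v l) = (if l < k then v l else 0)"
    if "l < e + k" for l
  proof -
    have "Q (Suc c + (e + k - Suc l)) \<longleftrightarrow> l < k"
      using that by (auto simp: Q_def)
    then show ?thesis
      unfolding v_def Y_def by (simp only: filter_terms_var_power_mult[OF free(2)])
  qed
  ultimately have "filter_terms (\<lambda>m. Q (Poly_Mapping.lookup m j)) (dl_pi j (h * Y ^ (c + (e + k)) * Z ^ c))
      = (\<Sum>l<k. u l) + (\<Sum>l<k. v l)"
    unfolding pi filter_terms_add filter_terms_sum by (simp add: sum_lessThan_if_less)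
  also have "\<dots> = (\<Sum>l<k. h * ((1 + beta * Z) * Y ^ Suc (c + e) * Z ^ c * (Y ^ (k - Suc l) * Z ^ l)))"
    unfolding sum.distrib[symmetric]
  proof (rule sum.cong)
    fix l assume "l \<in> {..<k}"
    then obtain r where "k = Suc (l + r)"
      using less_iff_Suc_add by auto
    then show "u l + v l = h * ((1 + beta * Z) * Y ^ Suc (c + e) * Z ^ c * (Y ^ (k - Suc l) * Z ^ l))"
      by (simp add: u_def v_def power_add algebra_simps)
  qed simp
  also have "\<dots> = h * ((1 + beta * Z) * Y ^ Suc (c + e) * Z ^ c * hsum Y Z k)"
    by (simp only: hsum_def sum_distrib_left)
  finally show ?thesis
    unfolding Q_def Y_def Z_def .
qed

lemma filter_terms_dl_pi_dl_pi_monomial: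
  assumes "0 < i" "free_of {i, Suc i, Suc (Suc i)} R"
  defines "X \<equiv> var i" and "Y \<equiv> var (Suc i)" and "Z \<equiv> var (Suc (Suc i))"
  shows "filter_terms (\<lambda>m. \<not> (c \<le> Poly_Mapping.lookup m (Suc i) \<and> Poly_Mapping.lookup m (Suc i) \<le> c + e))
      (dl_pi (Suc i) (dl_pi i (R * Z ^ c * X ^ (c + e + d) * Y ^ (c + e))))
    = Y * (1 + beta * X) * (R * (1 + beta * Z) * Z ^ c * (X * Y) ^ (c + e)
        * (\<Sum>k<d. X ^ (d - Suc k) * hsum Y Z (Suc k)))"
proof -
  define P where "P = (\<lambda>m. \<not> (c \<le> Poly_Mapping.lookup m (Suc i) \<and> Poly_Mapping.lookup m (Suc i) \<le> c + e))"
  define F where "F k = (1 + beta * Z) * Y ^ Suc (c + e) * Z ^ c * hsum Y Z k" for k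
  define h1 where "h1 k = R * X ^ (c + e + (d - k))" for k
  define h2 where "h2 k = R * beta * X ^ (Suc (c + e) + (d - Suc k))" for k
  have "free_of {Suc i, Suc (Suc i)} R" "free_of {Suc i, Suc (Suc i)} X" "free_of {Suc i, Suc (Suc i)} beta"
    using assms(2) by (auto simp: X_def free_of_var elim: free_of_subset)
  then have free: "free_of {Suc i, Suc (Suc i)} (h1 k)" "free_of {Suc i, Suc (Suc i)} (h2 k)" for k
    by (simp_all add: h1_def h2_def free_of_mult free_of_power)
  have pi_pi: "filter_terms P (dl_pi (Suc i) (h * Y ^ (c + (e + k)) * Z ^ c)) = h * F k"
    if "free_of {Suc i, Suc (Suc i)} h" for h k
    using filter_terms_dl_pi_var_power_pair[of "Suc i" h c e k] that by (simp add: P_def F_def Y_def Z_def)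
  have "R * Z ^ c * X ^ (c + e + d) * Y ^ (c + e) = (R * Z ^ c) * X ^ (c + e + d) * Y ^ (c + e)"
    by simp
  moreover have "free_of {i, Suc i} (R * Z ^ c)"
    using assms(2) by (auto simp: Z_def intro!: free_of_mult free_of_power free_of_var elim: free_of_subset)
  ultimately have expand: "dl_pi i (R * Z ^ c * X ^ (c + e + d) * Y ^ (c + e))
      = (\<Sum>k<Suc d. h1 k * Y ^ (c + (e + k)) * Z ^ c) + (\<Sum>k<d. h2 k * Y ^ (c + (e + Suc k)) * Z ^ c)"
    using dl_pi_monomial_expansion[OF assms(1), of "R * Z ^ c" "c + e" d]
    by (simp add: X_def Y_def h1_def h2_def ac_simps)
  have "filter_terms P (dl_pi (Suc i) (dl_pi i (R * Z ^ c * X ^ (c + e + d) * Y ^ (c + e))))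
      = (\<Sum>k<Suc d. h1 k * F k) + (\<Sum>k<d. h2 k * F (Suc k))"
    unfolding expand dl_pi_add dl_pi_sum filter_terms_add filter_terms_sum by (simp only: pi_pi free)
  also have "\<dots> = (\<Sum>k<d. (h1 (Suc k) + h2 k) * F (Suc k))"
    by (simp add: F_def hsum_def sum.lessThan_Suc_shift sum.distrib algebra_simps del: sum.lessThan_Suc)
  also have "\<dots> = Y * (1 + beta * X) * (R * (1 + beta * Z) * Z ^ c * (X * Y) ^ (c + e)
        * (\<Sum>k<d. X ^ (d - Suc k) * hsum Y Z (Suc k)))"
    unfolding sum_distrib_left
  proof (rule sum.cong)
    fix k assume "k \<in> {..<d}"
    then obtain r where "d = Suc (k + r)"
      using less_iff_Suc_add by auto
    then show "(h1 (Suc k) + h2 k) * F (Suc k) = Y * (1 + beta * X) * (R * (1 + beta * Z) * Z ^ c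
        * (X * Y) ^ (c + e) * (X ^ (d - Suc k) * hsum Y Z (Suc k)))"
      by (simp add: h1_def h2_def F_def power_add power_mult_distrib algebra_simps)
  qed simp
  finally show ?thesis
    unfolding P_def .
qed

lemma dl_pi_filter_terms_dl_pi_dl_pi_eq_0:
  assumes "0 < i" "Poly_Mapping.lookup m i = c + e + d" "Poly_Mapping.lookup m (Suc i) = c + e"
    "Poly_Mapping.lookup m (Suc (Suc i)) = c"
  shows "dl_pi i (filter_terms (\<lambda>m'. \<not> (c \<le> Poly_Mapping.lookup m' (Suc i) \<and> Poly_Mapping.lookup m' (Suc i) \<le> c + e))
    (dl_pi (Suc i) (dl_pi i (frag_of m)))) = 0"
proof -
  define X Y Z where "X = var i" and "Y = var (Suc i)" and "Z = var (Suc (Suc i))"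
  define m' where "m' = Poly_Mapping.update (Suc (Suc i)) 0 m"
  define R where "R = frag_of (Poly_Mapping.update (Suc i) 0 (Poly_Mapping.update i 0 m'))"
  have "frag_of m = R * Z ^ c * X ^ (c + e + d) * Y ^ (c + e)"
    using frag_of_eq_mult_var_power[of m "Suc (Suc i)"] frag_of_eq_mult_var_power[of m' i]
      frag_of_eq_mult_var_power[of "Poly_Mapping.update i 0 m'" "Suc i"] assms
    by (simp add: R_def X_def Y_def Z_def m'_def lookup_update ac_simps)
  moreover have R: "free_of {i, Suc i, Suc (Suc i)} R"
    unfolding R_def by (rule free_of_frag_of) (auto simp: m'_def lookup_update)
  ultimately have "filter_terms (\<lambda>m'. \<not> (c \<le> Poly_Mapping.lookup m' (Suc i) \<and> Poly_Mapping.lookup m' (Suc i) \<le> c + e))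
      (dl_pi (Suc i) (dl_pi i (frag_of m)))
    = Y * (1 + beta * X) * (R * (1 + beta * Z) * Z ^ c * (X * Y) ^ (c + e)
        * (\<Sum>l<d. Z ^ l * hsum X Y (d - l)))"
    using filter_terms_dl_pi_dl_pi_monomial[OF assms(1) R, of c e d] by (simp add: X_def Y_def Z_def sum_power_hsum_eq)
  moreover have "swap_var i R = R"
    using R by (auto intro: swap_var_free_of elim: free_of_subset)
  then have "swap_var i (R * (1 + beta * Z) * Z ^ c * (X * Y) ^ (c + e) * (\<Sum>l<d. Z ^ l * hsum X Y (d - l)))
      = R * (1 + beta * Z) * Z ^ c * (X * Y) ^ (c + e) * (\<Sum>l<d. Z ^ l * hsum X Y (d - l))"
    using assms(1) by (simp add: X_def Y_def Z_def swap_var_hsum hsum_commute mult.commute)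
  ultimately show ?thesis
    unfolding X_def Y_def by (simp add: assms(1) dl_pi_kernel_mult_symmetric)
qed

section \<open>Supports\<close>

lemma keys_dl_pi_subset:
  assumes "Poly_Mapping.keys f \<subseteq> S" "\<And>m. m \<in> S \<Longrightarrow> Poly_Mapping.keys (dl_pi i (frag_of m)) \<subseteq> T"
  shows "Poly_Mapping.keys (dl_pi i f) \<subseteq> T"
  using assms(1)
proof (induction f rule: frag_induction)
  case (one m)
  then show ?case
    by (rule assms(2))
next
  case (diff a b)
  then show ?case
    using keys_diff[of "dl_pi i a" "dl_pi i b"] by auto
qed simp

lemma keys_dl_pi_frag_of:
  assumes "0 < i" "Poly_Mapping.lookup m (Suc i) \<le> Poly_Mapping.lookup m i"
  shows "Poly_Mapping.keys (dl_pi i (frag_of m)) \<subseteq>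
    {v. (\<forall>l. l \<noteq> 0 \<and> l \<noteq> i \<and> l \<noteq> Suc i \<longrightarrow> Poly_Mapping.lookup v l = Poly_Mapping.lookup m l)
      \<and> Poly_Mapping.lookup m (Suc i) \<le> Poly_Mapping.lookup v (Suc i)
      \<and> Poly_Mapping.lookup m (Suc i) \<le> Poly_Mapping.lookup v i \<and> Poly_Mapping.lookup v i \<le> Poly_Mapping.lookup m i}"
    (is "_ \<subseteq> ?K")
proof -
  define b d where "b = Poly_Mapping.lookup m (Suc i)" and "d = Poly_Mapping.lookup m i - b"
  define m0 where "m0 = Poly_Mapping.update (Suc i) 0 (Poly_Mapping.update i 0 m)"
  define mon where "mon p q = m0 + Poly_Mapping.single i p + Poly_Mapping.single (Suc i) q" for p q
  have m_eq: "frag_of m = frag_of m0 * var i ^ (b + d) * var (Suc i) ^ b"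
    using frag_of_eq_mult_var_power[of m i] frag_of_eq_mult_var_power[of "Poly_Mapping.update i 0 m" "Suc i"]
      assms(2) by (simp add: m0_def b_def d_def lookup_update)
  have free: "free_of {i, Suc i} (frag_of m0)"
    by (rule free_of_frag_of) (auto simp: m0_def lookup_update)
  have mon_eq: "frag_of m0 * var i ^ p * var (Suc i) ^ q = frag_of (mon p q)"
    "frag_of m0 * beta * var i ^ p * var (Suc i) ^ q = frag_of (Poly_Mapping.single 0 1 + mon p q)" for p q
    by (simp only: var_power, simp add: mon_def var_def mult_single ac_simps)+
  have "dl_pi i (frag_of m) = (\<Sum>k<Suc d. frag_of m0 * var i ^ (b + (d - k)) * var (Suc i) ^ (b + k))
      + (\<Sum>k<d. frag_of m0 * beta * var i ^ (Suc b + (d - Suc k)) * var (Suc i) ^ (Suc b + k))"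
    unfolding m_eq by (rule dl_pi_monomial_expansion[OF assms(1) free])
  also have "\<dots> = (\<Sum>k<Suc d. frag_of (mon (b + (d - k)) (b + k)))
      + (\<Sum>k<d. frag_of (Poly_Mapping.single 0 1 + mon (Suc b + (d - Suc k)) (Suc b + k)))"
    by (simp only: mon_eq)
  finally have expansion: "dl_pi i (frag_of m) = (\<Sum>k<Suc d. frag_of (mon (b + (d - k)) (b + k)))
      + (\<Sum>k<d. frag_of (Poly_Mapping.single 0 1 + mon (Suc b + (d - Suc k)) (Suc b + k)))" .
  have mon_in: "mon p q \<in> ?K" "Poly_Mapping.single 0 1 + mon p q \<in> ?K"
    if "b \<le> p" "p \<le> b + d" "b \<le> q" for p q
    using that assms by (auto simp: mon_def m0_def b_def d_def lookup_add lookup_update lookup_single)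
  show ?thesis
    unfolding expansion
  proof (intro subset_trans[OF keys_add] Un_least subset_trans[OF keys_sum] UN_least)
    fix k assume "k \<in> {..<Suc d}"
    then show "Poly_Mapping.keys (frag_of (mon (b + (d - k)) (b + k))) \<subseteq> ?K"
      using mon_in(1) by (simp add: keys_frag_of)
  next
    fix k assume "k \<in> {..<d}"
    then show "Poly_Mapping.keys (frag_of (Poly_Mapping.single 0 1 + mon (Suc b + (d - Suc k)) (Suc b + k))) \<subseteq> ?K"
      using mon_in(2) by (simp add: keys_frag_of)
  qed
qed

lemma filter_terms_dl_pi_frag_of_eq_0:
  assumes "0 < i" "Poly_Mapping.lookup m (Suc i) \<le> Poly_Mapping.lookup m i"
  shows "filter_terms (\<lambda>v. \<not> (Poly_Mapping.lookup m (Suc i) \<le> Poly_Mapping.lookup v i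
      \<and> Poly_Mapping.lookup v i \<le> Poly_Mapping.lookup m i)) (dl_pi i (frag_of m)) = 0"
  using keys_dl_pi_frag_of[OF assms] by (intro filter_terms_eq_0) auto

lemma keys_dl_word_c_word:
  assumes "\<And>l. 0 < l \<Longrightarrow> l \<le> k \<Longrightarrow> Poly_Mapping.lookup L (Suc l) \<le> Poly_Mapping.lookup L l"
  shows "Poly_Mapping.keys (dl_word (c_word k) (frag_of L)) \<subseteq>
    {v. (\<forall>l. Suc k < l \<longrightarrow> Poly_Mapping.lookup v l = Poly_Mapping.lookup L l)
      \<and> Poly_Mapping.lookup L (Suc k) \<le> Poly_Mapping.lookup v (Suc k)}"
  using assms
proof (induction k)
  case 0
  then show ?case
    by (simp add: c_word_def keys_frag_of)
next
  case (Suc k)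
  show ?case
    unfolding c_word_Suc dl_word_Cons
  proof (rule keys_dl_pi_subset[OF Suc.IH])
    fix m
    assume m: "m \<in> {v. (\<forall>l. Suc k < l \<longrightarrow> Poly_Mapping.lookup v l = Poly_Mapping.lookup L l)
      \<and> Poly_Mapping.lookup L (Suc k) \<le> Poly_Mapping.lookup v (Suc k)}"
    then have m2: "Poly_Mapping.lookup m (Suc (Suc k)) = Poly_Mapping.lookup L (Suc (Suc k))"
      and "Poly_Mapping.lookup m (Suc (Suc k)) \<le> Poly_Mapping.lookup m (Suc k)"
      using Suc.prems[of "Suc k"] by auto
    then have "Poly_Mapping.keys (dl_pi (Suc k) (frag_of m)) \<subseteq>
      {v. (\<forall>l. l \<noteq> 0 \<and> l \<noteq> Suc k \<and> l \<noteq> Suc (Suc k) \<longrightarrow> Poly_Mapping.lookup v l = Poly_Mapping.lookup m l)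
        \<and> Poly_Mapping.lookup m (Suc (Suc k)) \<le> Poly_Mapping.lookup v (Suc (Suc k))}"
      using keys_dl_pi_frag_of[of "Suc k" m] by auto
    also have "\<dots> \<subseteq> {v. (\<forall>l. Suc (Suc k) < l \<longrightarrow> Poly_Mapping.lookup v l = Poly_Mapping.lookup L l)
        \<and> Poly_Mapping.lookup L (Suc (Suc k)) \<le> Poly_Mapping.lookup v (Suc (Suc k))}"
      using m m2 by auto
    finally show "Poly_Mapping.keys (dl_pi (Suc k) (frag_of m)) \<subseteq>
      {v. (\<forall>l. Suc (Suc k) < l \<longrightarrow> Poly_Mapping.lookup v l = Poly_Mapping.lookup L l)
        \<and> Poly_Mapping.lookup L (Suc (Suc k)) \<le> Poly_Mapping.lookup v (Suc (Suc k))}" .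
  qed (use Suc.prems in auto)
qed

section \<open>The nonalternating part\<close>

lemma dl_pi_filter_terms_dl_word_c_word_eq_0:
  assumes "0 < i" "\<And>l. 0 < l \<Longrightarrow> l \<le> Suc i \<Longrightarrow> Poly_Mapping.lookup L (Suc l) \<le> Poly_Mapping.lookup L l"
  shows "dl_pi i (filter_terms (\<lambda>v. \<not> (Poly_Mapping.lookup L (Suc (Suc i)) \<le> Poly_Mapping.lookup v (Suc i)
      \<and> Poly_Mapping.lookup v (Suc i) \<le> Poly_Mapping.lookup L (Suc i))) (dl_word (c_word (Suc i)) (frag_of L))) = 0"
proof -
  obtain i' where i': "i = Suc i'"
    using assms(1) by (cases i) auto
  define c e where "c = Poly_Mapping.lookup L (Suc (Suc i))" and "e = Poly_Mapping.lookup L (Suc i) - c"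
  have ce: "c + e = Poly_Mapping.lookup L (Suc i)"
    using assms(2)[of "Suc i"] by (simp add: c_def e_def)
  define G where "G = dl_word (c_word i') (frag_of L)"
  have "Poly_Mapping.keys G \<subseteq> {v. (\<forall>l. i < l \<longrightarrow> Poly_Mapping.lookup v l = Poly_Mapping.lookup L l)
      \<and> Poly_Mapping.lookup L i \<le> Poly_Mapping.lookup v i}"
    using keys_dl_word_c_word[of i' L] assms(2) i' by (auto simp: G_def)
  then have "dl_pi i (filter_terms (\<lambda>v. \<not> (c \<le> Poly_Mapping.lookup v (Suc i) \<and> Poly_Mapping.lookup v (Suc i) \<le> c + e))
      (dl_pi (Suc i) (dl_pi i G))) = 0"
  proof (induction G rule: frag_induction)
    case (one m)
    then have "Poly_Mapping.lookup m i = c + e + (Poly_Mapping.lookup m i - (c + e))"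
      using assms(2)[of i] assms(1) ce by auto
    with one show ?case
      using assms(1) ce by (intro dl_pi_filter_terms_dl_pi_dl_pi_eq_0) (auto simp: c_def)
  qed simp_all
  then show ?thesis
    using i' ce by (simp add: G_def c_def c_word_Suc)
qed

definition interlaces_at :: "(nat \<Rightarrow> nat) \<Rightarrow> nat \<Rightarrow> (nat \<Rightarrow>\<^sub>0 nat) \<Rightarrow> bool" where
  "interlaces_at lam j m \<longleftrightarrow> lam (Suc j) \<le> Poly_Mapping.lookup m j \<and> Poly_Mapping.lookup m j \<le> lam j"

lemma if_all_eq_sum_last_failure:
  fixes x :: "'a::comm_monoid_add"
  shows "(if \<forall>j\<in>{a..<n}. Q j then 0 else x) = (\<Sum>j\<in>{a..<n}. if \<not> Q j \<and> (\<forall>k\<in>{Suc j..<n}. Q k) then x else 0)"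
proof (induction n)
  case (Suc n)
  show ?case
  proof (cases "a \<le> n")
    case True
    have "(\<forall>k\<in>{Suc j..<Suc n}. Q k) \<longleftrightarrow> (\<forall>k\<in>{Suc j..<n}. Q k) \<and> Q n" if "j < n" for j
      using that less_Suc_eq by auto
    then show ?thesis
      using True Suc by (cases "Q n") (auto simp: atLeastLessThanSuc intro!: sum.neutral)
  qed simp
qed simp

lemma nonalt_part_eq_sum_last_failure:
  "nonalt_part n lam p
    = (\<Sum>j\<in>{1..<n}. filter_terms (\<lambda>m. \<not> interlaces_at lam j m \<and> (\<forall>k\<in>{Suc j..<n}. interlaces_at lam k m)) p)"
proof (rule poly_mapping_eqI)
  fix m
  have "Poly_Mapping.lookup (nonalt_part n lam p) m
      = (if \<forall>j\<in>{1..<n}. interlaces_at lam j m then 0 else Poly_Mapping.lookup p m)"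
    by (simp add: nonalt_part_eq_filter_terms lookup_filter_terms alternating_def interlaces_at_def)
  also have "\<dots> = (\<Sum>j\<in>{1..<n}. if \<not> interlaces_at lam j m \<and> (\<forall>k\<in>{Suc j..<n}. interlaces_at lam k m)
      then Poly_Mapping.lookup p m else 0)"
    by (rule if_all_eq_sum_last_failure)
  also have "\<dots> = Poly_Mapping.lookup (\<Sum>j\<in>{1..<n}.
      filter_terms (\<lambda>m. \<not> interlaces_at lam j m \<and> (\<forall>k\<in>{Suc j..<n}. interlaces_at lam k m)) p) m"
    by (simp add: lookup_sum lookup_filter_terms)
  finally show "Poly_Mapping.lookup (nonalt_part n lam p) m = Poly_Mapping.lookup (\<Sum>j\<in>{1..<n}.
      filter_terms (\<lambda>m. \<not> interlaces_at lam j m \<and> (\<forall>k\<in>{Suc j..<n}. interlaces_at lam k m)) p) m" .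
qed

lemma filter_terms_dl_word_c_word:
  assumes "0 < j" "j < n" "depends_only_on {j} P"
  shows "filter_terms (\<lambda>m. P m \<and> A m) (dl_word (c_word (n - 1)) f)
    = filter_terms A (dl_word (rev [Suc j..<n]) (filter_terms P (dl_word (c_word j) f)))"
proof -
  have c_word: "c_word (n - 1) = rev [Suc j..<n] @ c_word j"
    using c_word_split[of j "n - 1"] assms(2) by (simp del: upt_Suc)
  have "filter_terms (\<lambda>m. P m \<and> A m) (dl_word (c_word (n - 1)) f)
      = filter_terms A (filter_terms P (dl_word (rev [Suc j..<n]) (dl_word (c_word j) f)))"
    unfolding c_word dl_word_append filter_terms_filter_terms by (simp add: conj_commute)
  also have "\<dots> = filter_terms A (dl_word (rev [Suc j..<n]) (filter_terms P (dl_word (c_word j) f)))"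
    using assms(1) by (subst filter_terms_dl_word[OF assms(3)]) auto
  finally show ?thesis .
qed

lemma dl_word_w0_word_last_failure_eq_0:
  assumes "j \<in> {1..<n}" "\<forall>j\<in>{1..<n}. lam (Suc j) \<le> lam j"
    and L: "\<And>l. 0 < l \<Longrightarrow> l \<le> n \<Longrightarrow> Poly_Mapping.lookup L l = lam l"
  shows "dl_word (w0_word n) (filter_terms (\<lambda>m. \<not> interlaces_at lam j m \<and> (\<forall>k\<in>{Suc j..<n}. interlaces_at lam k m))
    (dl_word (c_word (n - 1)) (frag_of L))) = 0"
proof -
  define A where "A = (\<lambda>m. \<forall>k\<in>{Suc j..<n}. interlaces_at lam k m)"
  define F where "F = filter_terms (\<lambda>m. \<not> interlaces_at lam j m) (dl_word (c_word j) (frag_of L))"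
  have L_dec: "Poly_Mapping.lookup L (Suc l) \<le> Poly_Mapping.lookup L l" if "0 < l" "l < n" for l
    using that assms(2) L[of l] L[of "Suc l"] by auto
  have "depends_only_on {j} (\<lambda>m. \<not> interlaces_at lam j m)"
    by (simp add: depends_only_on_def interlaces_at_def)
  then have piece: "filter_terms (\<lambda>m. \<not> interlaces_at lam j m \<and> (\<forall>k\<in>{Suc j..<n}. interlaces_at lam k m))
      (dl_word (c_word (n - 1)) (frag_of L)) = filter_terms A (dl_word (rev [Suc j..<n]) F)"
    unfolding F_def A_def using assms(1) by (intro filter_terms_dl_word_c_word) auto
  show ?thesis
  proof (cases "j = 1")
    case True
    then have "F = 0"
      using filter_terms_dl_pi_frag_of_eq_0[of 1 L] L_dec[of 1] L[of 1] L[of 2] assms(1)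
      by (simp add: F_def c_word_def interlaces_at_def numeral_2_eq_2)
    then show ?thesis
      unfolding piece by simp
  next
    case False
    then obtain i where i: "j = Suc i" "0 < i"
      using assms(1) by (cases j) auto
    have "depends_only_on {Suc j..<n} A"
      by (simp add: depends_only_on_def A_def interlaces_at_def)
    then have "dl_pi i (filter_terms A (dl_word (rev [Suc j..<n]) F))
        = filter_terms A (dl_pi i (dl_word (rev [Suc j..<n]) F))"
      by (rule filter_terms_dl_pi[symmetric]) (use i in auto)
    also have "\<dots> = filter_terms A (dl_word (rev [Suc j..<n]) (dl_pi i F))"
      by (subst dl_pi_dl_word_commute) (use i in auto)
    also have "dl_pi i F = 0"
      using dl_pi_filter_terms_dl_word_c_word_eq_0[of i L] i assms(1) L_dec L[of j] L[of "Suc j"]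
      by (simp add: F_def interlaces_at_def)
    finally have "dl_pi i (filter_terms A (dl_word (rev [Suc j..<n]) F)) = 0"
      by simp
    then show ?thesis
      unfolding piece using i assms(1) by (intro dl_word_w0_word_eq_0[of i]) auto
  qed
qed

lemma xmon_eq_frag_of: "xmon n lam = frag_of (\<Sum>k\<in>{1..n}. Poly_Mapping.single k (lam k))"
proof -
  have "(\<Prod>k\<in>A. var k ^ lam k) = frag_of (\<Sum>k\<in>A. Poly_Mapping.single k (lam k))" if "finite A" for A
    using that by (induction A rule: finite_induct) (simp_all add: var_power mult_single)
  then show ?thesis
    by (simp add: xmon_def)
qed

theorem lemma5p5:
  fixes n :: nat and lam :: "nat \<Rightarrow> nat"
  assumes "n \<ge> 2"
    and "\<forall>j \<in> {1..<n}. lam (Suc j) \<le> lam j"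
  shows "dl_word (w0_word n) (nonalt_part n lam (dl_word (c_word (n - 1)) (xmon n lam))) = 0"
proof -
  define L where "L = (\<Sum>k\<in>{1..n}. Poly_Mapping.single k (lam k))"
  have L: "Poly_Mapping.lookup L l = lam l" if "0 < l" "l \<le> n" for l
    using that by (simp add: L_def lookup_sum lookup_single when_def)
  show ?thesis
    unfolding xmon_eq_frag_of L_def[symmetric] nonalt_part_eq_sum_last_failure dl_word_sum
    using dl_word_w0_word_last_failure_eq_0[OF _ assms(2) L] by simp
qed

end
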